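(* Let $\zeta\equiv\Phi$ or $\zeta\equiv1$, $t\ge0$, $n\in\mathbb N^*$, and $(x_1,\dots,x_n)\in\mathbb X^n$, $x_i=(t_i,\theta_i)$, with $0<t_1<\dots<t_n\le t$. Then $$\int_{\mathbb{R}_+^n}c_n^{\zeta,t}(x_1,\dots,x_n)\,d\theta_1\cdots d\theta_n=\mu\,\zeta(t-t_n)\prod_{i=2}^n\Phi(t_i-t_{i-1}),$$ with the convention that an empty product equals $1$.
   Context: Let $\mu>0$ and $\Phi:\mathbb{R}_+\to\mathbb{R}_+$ integrable with $\int_0^\infty\Phi<1$. Let $\mathbb X=\mathbb{R}_+\times\mathbb{R}_+$, points $x=(t,\theta)$. Let $\Omega$ be the space of configurations $\omega=\sum_i\delta_{x_i}$ on $\mathbb X$ with $\mathbb P$ the Poisson measure making the canonical measure $N(\omega)=\omega$ a Poisson random measure of intensity $dt\,d\theta$. Let $\lambda$ be the unique pathwise solution of $\lambda_t=\mu+\int_{(0,t)\times\mathbb{R}_+}\Phi(t-s)\mathbf 1_{\{\theta\le\lambda_s\}}N(ds,d\theta)$, and for $\zeta\in\{\Phi,1\}$ set $X^\zeta_t:=\int_{(0,t)\times\mathbb{R}_+}\zeta(t-s)\mathbf 1_{\{\theta\le\lambda_s\}}N(ds,d\theta)$. For $x_1,\dots,x_n$ with $t_1<\dots<t_n$ and a functional $F$ of $\omega$, $\mathcal D^n_{(x_1,\dots,x_n)}F:=\sum_{J\subset\{x_1,\dots,x_n\}}(-1)^{n-|J|}F(\sum_{y\in J}\delta_y)$. Define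 $c_n^{\zeta,t}(x_1,\dots,x_n):=\mathcal D^n_{(x_{(1)},\dots,x_{(n)})}X^\zeta_t$, where $(x_{(1)},\dots,x_{(n)})$ is the reordering of $(x_1,\dots,x_n)$ by increasing time coordinate. *)

theory Defs
  imports "HOL-Analysis.Analysis"
begin

text \<open>Finite configurations on X = R+ x R+ are represented as finite sets of points
  (t, theta).\<close>

definition is_intensity :: "real \<Rightarrow> (real \<Rightarrow> real) \<Rightarrow> (real \<times> real) set \<Rightarrow> (real \<Rightarrow> real) \<Rightarrow> bool" where
  "is_intensity \<mu> \<Phi> J lam \<longleftrightarrow>
     (\<forall>s. lam s = \<mu> + (\<Sum>y\<in>{y\<in>J. 0 < fst y \<and> fst y < s}.
                         \<Phi> (s - fst y) * (if snd y \<le> lam (fst y) then 1 else 0)))"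

definition intensity :: "real \<Rightarrow> (real \<Rightarrow> real) \<Rightarrow> (real \<times> real) set \<Rightarrow> real \<Rightarrow> real" where
  "intensity \<mu> \<Phi> J = (THE lam. is_intensity \<mu> \<Phi> J lam)"

definition Xproc :: "real \<Rightarrow> (real \<Rightarrow> real) \<Rightarrow> (real \<Rightarrow> real) \<Rightarrow> real \<Rightarrow> (real \<times> real) set \<Rightarrow> real" where
  "Xproc \<mu> \<Phi> \<zeta> t J =
     (\<Sum>y\<in>{y\<in>J. 0 < fst y \<and> fst y \<le> t}.
        \<zeta> (t - fst y) * (if snd y \<le> intensity \<mu> \<Phi> J (fst y) then 1 else 0))"

definition Dn :: "((real \<times> real) set \<Rightarrow> real) \<Rightarrow> (real \<times> real) list \<Rightarrow> real" where
  "Dn F xs = (\<Sum>J\<in>Pow (set xs). (-1) ^ (length xs - card J) * F J)"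

definition cn :: "real \<Rightarrow> (real \<Rightarrow> real) \<Rightarrow> (real \<Rightarrow> real) \<Rightarrow> real \<Rightarrow> (real \<times> real) list \<Rightarrow> real" where
  "cn \<mu> \<Phi> \<zeta> t xs = Dn (Xproc \<mu> \<Phi> \<zeta> t) (sort_key fst xs)"

end

(*
  For finitely many points the intensity is given by a finite recursion along
  the time order, so c_n is an alternating sum, over the subconfigurations S of
  {x_1, ..., x_n}, of the sums of zeta(t - t_j) over those points j of S that
  survive the thinning theta_j <= lambda^S(t_j).  Since lambda^S(t_j) only sees
  the points of S before t_j, differencing in x_n cancels every term but the one
  of x_n itself, leaving zeta(t - t_n) 1{theta_n <= lambda^A(t_n)} differenced
  over the subsets A of {x_1, ..., x_(n-1)}.  Integrating out theta_n turns the
  indicator into lambda^A(t_n) = mu + sum_(j in A) Phi(t_n - t_j) 1{theta_j <= lambda^A(t_j)};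
  differencing kills mu when n >= 2, and what remains is the same quantity for
  n - 1 with zeta(t - .) replaced by Phi(t_n - .).  Induction on n gives the
  product; for n = 1 only mu survives.  Integrability holds because the
  integrand is bounded and vanishes as soon as some mark exceeds a common bound
  of all intensities involved: that point is then rejected in every
  subconfiguration.
*)

theory Submission
  imports Defs
begin

lemma fun_upd_in_PiE_insert_iff:
  assumes "k \<notin> I" "x \<in> extensional I"
  shows "x(k := y) \<in> PiE (insert k I) A \<longleftrightarrow> x \<in> PiE I A \<and> y \<in> A k"
  using assms by (auto simp: PiE_iff extensional_def)

lemma emeasure_PiM_lborel_box_less_top:
  assumes "finite I"
  shows "emeasure (PiM I (\<lambda>_. lborel)) (PiE I (\<lambda>_. {a..b::real})) < \<infinity>"
proof -
  interpret product_sigma_finite "\<lambda>_. lborel :: real measure" by standard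
  have "emeasure (PiM I (\<lambda>_. lborel)) (PiE I (\<lambda>_. {a..b})) = (\<Prod>i\<in>I. emeasure lborel {a..b})"
    using assms by (intro emeasure_PiM) auto
  then show ?thesis
    by (simp add: emeasure_lborel_Icc_eq ennreal_power)
qed

lemma strict_mono_on_atLeastAtMostI:
  fixes f :: "nat \<Rightarrow> 'a::order"
  assumes "\<And>i. a \<le> i \<Longrightarrow> i < b \<Longrightarrow> f i < f (Suc i)"
  shows "strict_mono_on {a..b} f"
proof (rule strict_mono_onI)
  fix i j assume "i \<in> {a..b}" "j \<in> {a..b}" "i < j"
  then have "Suc i \<le> j" "a \<le> i" "j \<le> b" by auto
  then show "f i < f j"
  proof (induction j rule: dec_induct)
    case base
    then show ?case using assms by simp
  next
    case (step j)
    then show ?case using assms[of j] by force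
  qed
qed

section \<open>Alternating differences over subsets\<close>

definition alt_diff :: "'a set \<Rightarrow> ('a set \<Rightarrow> 'b::comm_ring_1) \<Rightarrow> 'b" where
  "alt_diff I f = (\<Sum>S\<in>Pow I. (-1) ^ (card I - card S) * f S)"

lemma alt_diff_empty [simp]: "alt_diff {} f = f {}"
  by (simp add: alt_diff_def)

lemma alt_diff_cong: "(\<And>A. A \<subseteq> I \<Longrightarrow> f A = g A) \<Longrightarrow> alt_diff I f = alt_diff I g"
  unfolding alt_diff_def by (intro sum.cong) auto

lemma alt_diff_add: "alt_diff I (\<lambda>A. f A + g A) = alt_diff I f + alt_diff I g"
  unfolding alt_diff_def by (simp add: distrib_left sum.distrib)

lemma alt_diff_mult_left: "alt_diff I (\<lambda>A. c * f A) = c * alt_diff I f"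
  unfolding alt_diff_def by (simp add: sum_distrib_left mult.left_commute)

lemma alt_diff_insert:
  assumes "finite I" "k \<notin> I"
  shows "alt_diff (insert k I) f = alt_diff I (\<lambda>A. f (insert k A) - f A)"
proof -
  let ?s = "\<lambda>A. (-1::'b) ^ (card I - card A)"
  have card_le: "card A \<le> card I" if "A \<in> Pow I" for A
    using that assms(1) by (simp add: card_mono)
  have sign_without_k: "(-1) ^ (card (insert k I) - card A) = - ?s A" if "A \<in> Pow I" for A
  proof -
    have "card (insert k I) - card A = Suc (card I - card A)"
      using assms card_le[OF that] by simp
    then show ?thesis by simp
  qed
  have sign_with_k: "(-1) ^ (card (insert k I) - card (insert k A)) = ?s A" if "A \<in> Pow I" for A
  proof -
    have "k \<notin> A" "finite A"
      using that assms finite_subset[of A I] by auto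
    then show ?thesis
      using assms by simp
  qed
  have inj: "inj_on (insert k) (Pow I)"
    using assms(2) unfolding inj_on_def by (meson PowD insert_ident subsetD)
  have "alt_diff (insert k I) f
      = (\<Sum>A\<in>Pow I. (-1) ^ (card (insert k I) - card A) * f A)
      + (\<Sum>A\<in>insert k ` Pow I. (-1) ^ (card (insert k I) - card A) * f A)"
    unfolding alt_diff_def Pow_insert using assms by (intro sum.union_disjoint) auto
  also have "\<dots> = (\<Sum>A\<in>Pow I. - (?s A * f A)) + (\<Sum>A\<in>Pow I. ?s A * f (insert k A))"
    unfolding sum.reindex[OF inj] comp_def
    by (intro arg_cong2[where f = "(+)"] sum.cong) (simp_all add: sign_without_k sign_with_k)
  also have "\<dots> = alt_diff I (\<lambda>A. f (insert k A) - f A)"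
    unfolding alt_diff_def by (simp add: sum_negf[symmetric] sum.distrib[symmetric] right_diff_distrib)
  finally show ?thesis .
qed

lemma alt_diff_eq_0_if_insensitive:
  assumes "finite I" "k \<in> I" "\<And>A. A \<subseteq> I - {k} \<Longrightarrow> f (insert k A) = f A"
  shows "alt_diff I f = 0"
proof -
  have "alt_diff I f = alt_diff (insert k (I - {k})) f"
    using assms(2) by (simp add: insert_absorb)
  also have "\<dots> = alt_diff (I - {k}) (\<lambda>A. f (insert k A) - f A)"
    using assms(1) by (intro alt_diff_insert) auto
  also have "\<dots> = alt_diff (I - {k}) (\<lambda>_. 0)"
    using assms(3) by (intro alt_diff_cong) simp
  finally show ?thesis by (simp add: alt_diff_def)
qed

lemma alt_diff_const: "finite I \<Longrightarrow> I \<noteq> {} \<Longrightarrow> alt_diff I (\<lambda>_. c) = 0"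
  by (metis alt_diff_eq_0_if_insensitive ex_in_conv)

lemma abs_alt_diff_le:
  fixes f :: "'a set \<Rightarrow> real"
  assumes "finite I" "\<And>A. A \<subseteq> I \<Longrightarrow> \<bar>f A\<bar> \<le> B"
  shows "\<bar>alt_diff I f\<bar> \<le> 2 ^ card I * B"
proof -
  have "\<bar>alt_diff I f\<bar> \<le> (\<Sum>A\<in>Pow I. \<bar>(-1) ^ (card I - card A) * f A\<bar>)"
    unfolding alt_diff_def by (rule sum_abs)
  also have "\<dots> \<le> (\<Sum>A\<in>Pow I. B)"
    using assms(2) by (intro sum_mono) (simp add: abs_mult)
  also have "\<dots> = 2 ^ card I * B"
    using assms(1) by (simp add: card_Pow)
  finally show ?thesis .
qed

lemma alt_diff_image:
  assumes "inj_on p I"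
  shows "alt_diff (p ` I) F = alt_diff I (\<lambda>A. F (p ` A))"
proof -
  have "card (p ` A) = card A" if "A \<subseteq> I" for A
    using card_image inj_on_subset[OF assms that] by blast
  then show ?thesis
    unfolding alt_diff_def image_Pow_surj[of p I, symmetric, OF refl]
    by (simp add: sum.reindex[OF inj_on_image_Pow[OF assms]])
qed

lemma Dn_eq_alt_diff: "distinct xs \<Longrightarrow> Dn F xs = alt_diff (set xs) F"
  by (simp add: Dn_def alt_diff_def distinct_card)

lemma borel_measurable_alt_diff:
  fixes f :: "'a set \<Rightarrow> 'b \<Rightarrow> real"
  shows   "(\<And>A. A \<subseteq> I \<Longrightarrow> f A \<in> borel_measurable M) \<Longrightarrow> (\<lambda>x. alt_diff I (\<lambda>A. f A x)) \<in> borel_measurable M"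
  unfolding alt_diff_def by (intro borel_measurable_sum borel_measurable_times borel_measurable_const) auto

lemma integral_alt_diff:
  fixes f :: "'a set \<Rightarrow> 'b \<Rightarrow> real"
  assumes "\<And>A. A \<subseteq> I \<Longrightarrow> integrable M (f A)"
  shows "(\<integral>x. alt_diff I (\<lambda>A. f A x) \<partial>M) = alt_diff I (\<lambda>A. \<integral>x. f A x \<partial>M)"
  unfolding alt_diff_def using assms by (simp add: Bochner_Integration.integral_sum)

section \<open>The thinning recursion for finitely many points\<close>

lemma is_intensity_unique:
  assumes "finite J" "is_intensity \<mu> \<Phi> J l1" "is_intensity \<mu> \<Phi> J l2"
  shows "l1 = l2"
proof
  fix s
  show "l1 s = l2 s"
  proof (induction "card {y\<in>J. fst y < s}" arbitrary: s rule: less_induct)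
    case less
    have earlier: "l1 (fst y) = l2 (fst y)" if "y \<in> J" "fst y < s" for y
    proof (rule less.hyps)
      show "card {z\<in>J. fst z < fst y} < card {z\<in>J. fst z < s}"
        using that assms(1) by (intro psubset_card_mono) auto
    qed
    let ?rhs = "\<lambda>l. \<mu> + (\<Sum>y\<in>{y\<in>J. 0 < fst y \<and> fst y < s}. \<Phi> (s - fst y) * (if snd y \<le> l (fst y) then 1 else 0))"
    have "?rhs l1 = ?rhs l2"
      using earlier by (intro arg_cong[where f = "(+) \<mu>"] sum.cong) auto
    moreover have "l1 s = ?rhs l1" "l2 s = ?rhs l2"
      using assms(2,3) unfolding is_intensity_def by blast+
    ultimately show ?case by simp
  qed
qed

lemma intensity_eqI: "finite J \<Longrightarrow> is_intensity \<mu> \<Phi> J l \<Longrightarrow> intensity \<mu> \<Phi> J = l"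
  unfolding intensity_def by (blast intro: is_intensity_unique)

locale thinning =
  fixes \<mu> :: real and \<Phi> :: "real \<Rightarrow> real" and tt :: "nat \<Rightarrow> real"
begin

text \<open>\<open>lam S \<theta> i\<close> is the intensity at time \<open>tt i\<close> generated by the marked points
  \<open>(tt j, \<theta> j)\<close>, \<open>j \<in> S\<close>, where index order stands for time order; point \<open>j\<close> is kept by
  the thinning iff \<open>\<theta> j \<le> lam S \<theta> j\<close>.\<close>

function lam :: "nat set \<Rightarrow> (nat \<Rightarrow> real) \<Rightarrow> nat \<Rightarrow> real" where
  "lam S \<theta> i = \<mu> + (\<Sum>j\<in>S \<inter> {..<i}. \<Phi> (tt i - tt j) * of_bool (\<theta> j \<le> lam S \<theta> j))"
  by pat_completeness auto
termination by (relation "Wellfounded.measure (\<lambda>(S, \<theta>, i). i)") auto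

declare lam.simps [simp del]

lemma lam_cong:
  assumes "\<And>j. j < i \<Longrightarrow> j \<in> S \<longleftrightarrow> j \<in> S'" "\<And>j. j < i \<Longrightarrow> j \<in> S \<Longrightarrow> \<theta> j = \<theta>' j"
  shows "lam S \<theta> i = lam S' \<theta>' i"
  using assms
proof (induction i rule: less_induct)
  case (less i)
  have "S \<inter> {..<i} = S' \<inter> {..<i}"
    using less.prems(1) by auto
  then show ?case
    using less by (subst (1 2) lam.simps) (auto intro!: sum.cong)
qed

lemma lam_insert_ge: "i \<le> k \<Longrightarrow> lam (insert k S) \<theta> i = lam S \<theta> i"
  by (rule lam_cong) auto

lemma lam_fun_upd_ge: "i \<le> k \<Longrightarrow> lam S (\<theta>(k := y)) i = lam S \<theta> i"
  by (rule lam_cong) auto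

lemma lam_remove_rejected:
  assumes "lam S \<theta> k < \<theta> k"
  shows "lam (S - {k}) \<theta> i = lam S \<theta> i"
proof (induction i rule: less_induct)
  case (less i)
  have "(S - {k}) \<inter> {..<i} = S \<inter> {..<i} - {k}" by auto
  moreover have "(\<Sum>j\<in>S \<inter> {..<i} - {k}. \<Phi> (tt i - tt j) * of_bool (\<theta> j \<le> lam (S - {k}) \<theta> j))
      = (\<Sum>j\<in>S \<inter> {..<i}. \<Phi> (tt i - tt j) * of_bool (\<theta> j \<le> lam S \<theta> j))"
    using assms less.IH by (intro sum.mono_neutral_cong_left) auto
  ultimately show ?case
    by (subst (1 2) lam.simps) simp
qed

lemma lam_ge: "(\<And>j. j \<in> S \<Longrightarrow> j < i \<Longrightarrow> 0 \<le> \<Phi> (tt i - tt j)) \<Longrightarrow> \<mu> \<le> lam S \<theta> i"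
  by (subst lam.simps) (auto intro!: sum_nonneg)

lemma lam_le: "lam S \<theta> i \<le> \<mu> + (\<Sum>j<i. \<bar>\<Phi> (tt i - tt j)\<bar>)"
proof -
  have "(\<Sum>j\<in>S \<inter> {..<i}. \<Phi> (tt i - tt j) * of_bool (\<theta> j \<le> lam S \<theta> j)) \<le> (\<Sum>j\<in>S \<inter> {..<i}. \<bar>\<Phi> (tt i - tt j)\<bar>)"
    by (intro sum_mono) auto
  also have "\<dots> \<le> (\<Sum>j<i. \<bar>\<Phi> (tt i - tt j)\<bar>)"
    by (intro sum_mono2) auto
  finally show ?thesis
    by (subst lam.simps) simp
qed

lemma borel_measurable_lam:
  assumes "S \<subseteq> I"
  shows "(\<lambda>\<theta>. lam S \<theta> i) \<in> borel_measurable (PiM I (\<lambda>_. lborel))"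
proof (induction i rule: less_induct)
  case (less i)
  have "(\<lambda>\<theta>. \<Phi> (tt i - tt j) * of_bool (\<theta> j \<le> lam S \<theta> j)) \<in> borel_measurable (PiM I (\<lambda>_. lborel))"
    if "j \<in> S \<inter> {..<i}" for j
  proof -
    have [measurable]: "(\<lambda>\<theta>. \<theta> j) \<in> borel_measurable (PiM I (\<lambda>_. lborel))"
      and [measurable]: "(\<lambda>\<theta>. lam S \<theta> j) \<in> borel_measurable (PiM I (\<lambda>_. lborel))"
      using that assms less.IH by auto
    show ?thesis by (simp only: of_bool_def) measurable
  qed
  then show ?case
    by (subst lam.simps) (intro borel_measurable_add borel_measurable_const borel_measurable_sum)
qed

definition thinned_sum :: "(real \<Rightarrow> real) \<Rightarrow> nat set \<Rightarrow> (nat \<Rightarrow> real) \<Rightarrow> real" where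
  "thinned_sum g S \<theta> = (\<Sum>j\<in>S. g (tt j) * of_bool (\<theta> j \<le> lam S \<theta> j))"

text \<open>For \<open>g = (\<lambda>s. \<zeta> (t - s))\<close> this is \<open>c\<^sub>k\<close>; the induction on \<open>k\<close> needs arbitrary weights
  \<open>g\<close>, since integrating out the last mark produces the weight \<open>\<lambda>s. \<Phi> (tt (Suc k) - s)\<close>.\<close>

definition thinned_diff :: "nat \<Rightarrow> (real \<Rightarrow> real) \<Rightarrow> (nat \<Rightarrow> real) \<Rightarrow> real" where
  "thinned_diff k g \<theta> = alt_diff {1..k} (\<lambda>S. thinned_sum g S \<theta>)"

lemma lam_eq_thinned_sum: "S \<subseteq> {..<i} \<Longrightarrow> lam S \<theta> i = \<mu> + thinned_sum (\<lambda>s. \<Phi> (tt i - s)) S \<theta>"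
  by (subst lam.simps) (simp add: thinned_sum_def Int_absorb2)

text \<open>The intensity at a point ignores all later points, so only the summand of the
  last point survives differencing in it.\<close>

lemma thinned_diff_Suc:
  "thinned_diff (Suc m) g \<theta> = alt_diff {1..m} (\<lambda>A. g (tt (Suc m)) * of_bool (\<theta> (Suc m) \<le> lam A \<theta> (Suc m)))"
proof -
  have diff: "thinned_sum g (insert (Suc m) A) \<theta> - thinned_sum g A \<theta>
      = g (tt (Suc m)) * of_bool (\<theta> (Suc m) \<le> lam A \<theta> (Suc m))" if A: "A \<subseteq> {1..m}" for A
  proof -
    have "Suc m \<notin> A" "finite A"
      using A finite_subset by auto
    moreover have "(\<Sum>j\<in>A. g (tt j) * of_bool (\<theta> j \<le> lam (insert (Suc m) A) \<theta> j))
        = (\<Sum>j\<in>A. g (tt j) * of_bool (\<theta> j \<le> lam A \<theta> j))"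
      using A by (intro sum.cong refl) (auto simp: lam_insert_ge)
    ultimately show ?thesis
      unfolding thinned_sum_def by (simp add: lam_insert_ge)
  qed
  have "{1..Suc m} = insert (Suc m) {1..m}" by auto
  then have "thinned_diff (Suc m) g \<theta>
      = alt_diff {1..m} (\<lambda>A. thinned_sum g (insert (Suc m) A) \<theta> - thinned_sum g A \<theta>)"
    unfolding thinned_diff_def by (simp add: alt_diff_insert)
  also have "\<dots> = alt_diff {1..m} (\<lambda>A. g (tt (Suc m)) * of_bool (\<theta> (Suc m) \<le> lam A \<theta> (Suc m)))"
    by (intro alt_diff_cong diff)
  finally show ?thesis .
qed

lemma alt_diff_lam:
  assumes "1 \<le> m"
  shows "alt_diff {1..m} (\<lambda>A. lam A \<theta> (Suc m)) = thinned_diff m (\<lambda>s. \<Phi> (tt (Suc m) - s)) \<theta>"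
proof -
  have "alt_diff {1..m} (\<lambda>A. lam A \<theta> (Suc m))
      = alt_diff {1..m} (\<lambda>A. \<mu> + thinned_sum (\<lambda>s. \<Phi> (tt (Suc m) - s)) A \<theta>)"
    by (intro alt_diff_cong lam_eq_thinned_sum) auto
  also have "\<dots> = alt_diff {1..m} (\<lambda>_. \<mu>) + thinned_diff m (\<lambda>s. \<Phi> (tt (Suc m) - s)) \<theta>"
    unfolding thinned_diff_def by (rule alt_diff_add)
  finally show ?thesis
    using assms alt_diff_const[of "{1..m}" \<mu>] by simp
qed

lemma thinned_diff_eq_0_if_rejected:
  assumes "j \<in> {1..k}" "\<And>A. lam A \<theta> j < \<theta> j"
  shows "thinned_diff k g \<theta> = 0"
  unfolding thinned_diff_def
proof (rule alt_diff_eq_0_if_insensitive)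
  fix A assume A: "A \<subseteq> {1..k} - {j}"
  then have "j \<notin> A" "finite A"
    using finite_subset by auto
  moreover have "lam (insert j A) \<theta> l = lam A \<theta> l" for l
    using lam_remove_rejected[of "insert j A" \<theta> j l] assms(2) \<open>j \<notin> A\<close> by simp
  ultimately show "thinned_sum g (insert j A) \<theta> = thinned_sum g A \<theta>"
    using assms(2)[of A] unfolding thinned_sum_def by simp
qed (use assms in auto)

lemma abs_thinned_diff_le: "\<bar>thinned_diff k g \<theta>\<bar> \<le> 2 ^ k * (\<Sum>j\<in>{1..k}. \<bar>g (tt j)\<bar>)"
proof -
  have "\<bar>thinned_sum g A \<theta>\<bar> \<le> (\<Sum>j\<in>{1..k}. \<bar>g (tt j)\<bar>)" if "A \<subseteq> {1..k}" for A
  proof -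
    have "\<bar>thinned_sum g A \<theta>\<bar> \<le> (\<Sum>j\<in>A. \<bar>g (tt j)\<bar>)"
      unfolding thinned_sum_def by (rule order_trans[OF sum_abs]) (auto intro!: sum_mono simp: abs_mult)
    also have "\<dots> \<le> (\<Sum>j\<in>{1..k}. \<bar>g (tt j)\<bar>)"
      using that by (intro sum_mono2) auto
    finally show ?thesis .
  qed
  then show ?thesis
    using abs_alt_diff_le[of "{1..k}"] unfolding thinned_diff_def by fastforce
qed

lemma borel_measurable_thinned_diff: "thinned_diff k g \<in> borel_measurable (PiM {1..k} (\<lambda>_. lborel))"
proof -
  have "(\<lambda>\<theta>. g (tt j) * of_bool (\<theta> j \<le> lam A \<theta> j)) \<in> borel_measurable (PiM {1..k} (\<lambda>_. lborel))"
    if "A \<subseteq> {1..k}" "j \<in> A" for A j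
  proof -
    have [measurable]: "(\<lambda>\<theta>. \<theta> j) \<in> borel_measurable (PiM {1..k} (\<lambda>_. lborel))"
      and [measurable]: "(\<lambda>\<theta>. lam A \<theta> j) \<in> borel_measurable (PiM {1..k} (\<lambda>_. lborel))"
      using that borel_measurable_lam by auto
    show ?thesis by (simp only: of_bool_def) measurable
  qed
  then show ?thesis
    unfolding thinned_diff_def[abs_def] thinned_sum_def
    by (intro borel_measurable_alt_diff borel_measurable_sum)
qed

definition lam_bound :: "nat \<Rightarrow> real" where
  "lam_bound k = \<bar>\<mu>\<bar> + (\<Sum>i\<in>{1..k}. \<Sum>j<i. \<bar>\<Phi> (tt i - tt j)\<bar>)"

lemma lam_le_lam_bound:
  assumes "j \<in> {1..k}"
  shows "lam A \<theta> j \<le> lam_bound k"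
proof -
  have "(\<Sum>l<j. \<bar>\<Phi> (tt j - tt l)\<bar>) \<le> (\<Sum>i\<in>{1..k}. \<Sum>l<i. \<bar>\<Phi> (tt i - tt l)\<bar>)"
    using assms by (intro member_le_sum[where f = "\<lambda>i. \<Sum>l<i. \<bar>\<Phi> (tt i - tt l)\<bar>"]) (auto intro: sum_nonneg)
  then show ?thesis
    using lam_le[of A \<theta> j] unfolding lam_bound_def by linarith
qed

lemma abs_indicator_thinned_diff_le:
  "\<bar>indicator (PiE {1..k} (\<lambda>_. {0..})) \<theta> * thinned_diff k g \<theta>\<bar>
     \<le> 2 ^ k * (\<Sum>j\<in>{1..k}. \<bar>g (tt j)\<bar>) * indicator (PiE {1..k} (\<lambda>_. {0..lam_bound k})) \<theta>"
proof (cases "\<theta> \<in> PiE {1..k} (\<lambda>_. {0..lam_bound k})")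
  case True
  then show ?thesis
    using abs_thinned_diff_le[of k g \<theta>] by (auto simp: indicator_def)
next
  case outside: False
  show ?thesis
  proof (cases "\<theta> \<in> PiE {1..k} (\<lambda>_. {0..})")
    case True
    with outside obtain j where j: "j \<in> {1..k}" "lam_bound k < \<theta> j"
      by (auto simp: PiE_iff not_le)
    then have "thinned_diff k g \<theta> = 0"
      using le_less_trans[OF lam_le_lam_bound[OF j(1)] j(2)] by (intro thinned_diff_eq_0_if_rejected[of j])
    then show ?thesis by simp
  qed simp
qed

lemma integrable_thinned_diff:
  "integrable (PiM {1..k} (\<lambda>_. lborel)) (\<lambda>\<theta>. indicator (PiE {1..k} (\<lambda>_. {0..})) \<theta> * thinned_diff k g \<theta>)"
proof (rule Bochner_Integration.integrable_bound)
  let ?B = "PiE {1..k} (\<lambda>_. {0..lam_bound k})"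
  show "integrable (PiM {1..k} (\<lambda>_. lborel)) (\<lambda>\<theta>. 2 ^ k * (\<Sum>j\<in>{1..k}. \<bar>g (tt j)\<bar>) * indicator ?B \<theta>)"
    using emeasure_PiM_lborel_box_less_top[of "{1..k}" 0 "lam_bound k"]
    by (intro integrable_mult_right integrable_real_indicator sets_PiM_I_finite) auto
  show "(\<lambda>\<theta>. indicator (PiE {1..k} (\<lambda>_. {0..})) \<theta> * thinned_diff k g \<theta>) \<in> borel_measurable (PiM {1..k} (\<lambda>_. lborel))"
    using borel_measurable_thinned_diff by (intro borel_measurable_times borel_measurable_indicator sets_PiM_I_finite) auto
  show "AE \<theta> in PiM {1..k} (\<lambda>_. lborel). norm (indicator (PiE {1..k} (\<lambda>_. {0..})) \<theta> * thinned_diff k g \<theta>)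
      \<le> norm (2 ^ k * (\<Sum>j\<in>{1..k}. \<bar>g (tt j)\<bar>) * indicator ?B \<theta>)"
    using abs_indicator_thinned_diff_le by (intro AE_I2) (simp add: order_trans[OF _ abs_ge_self])
qed

end

section \<open>Finite configurations and integration over the marks\<close>

locale ordered_thinning = thinning +
  fixes n :: nat
  assumes mu_pos: "0 < \<mu>" and Phi_nonneg: "\<And>s. 0 \<le> s \<Longrightarrow> 0 \<le> \<Phi> s"
    and tt_pos: "0 < tt 1" and tt_strict_mono: "strict_mono_on {1..n} tt"
begin

definition config :: "(nat \<Rightarrow> real) \<Rightarrow> nat set \<Rightarrow> (real \<times> real) set" where
  "config \<theta> S = (\<lambda>j. (tt j, \<theta> j)) ` S"

definition lam_path :: "nat set \<Rightarrow> (nat \<Rightarrow> real) \<Rightarrow> real \<Rightarrow> real" where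
  "lam_path S \<theta> s = \<mu> + (\<Sum>j\<in>{j\<in>S. tt j < s}. \<Phi> (s - tt j) * of_bool (\<theta> j \<le> lam S \<theta> j))"

lemma tt_pos_on: "i \<in> {1..n} \<Longrightarrow> 0 < tt i"
  using tt_pos strict_mono_on_leD[OF tt_strict_mono, of 1 i] by force

lemma inj_on_marked_point: "S \<subseteq> {1..n} \<Longrightarrow> inj_on (\<lambda>j. (tt j, \<theta> j)) S"
  using inj_on_subset[OF strict_mono_on_imp_inj_on[OF tt_strict_mono]] by (auto simp: inj_on_def)

lemma sum_config:
  assumes "S \<subseteq> {1..n}"
  shows "(\<Sum>y\<in>{y\<in>config \<theta> S. P (fst y)}. F y) = (\<Sum>j\<in>{j\<in>S. P (tt j)}. F (tt j, \<theta> j))"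
proof -
  have "{y\<in>config \<theta> S. P (fst y)} = (\<lambda>j. (tt j, \<theta> j)) ` {j\<in>S. P (tt j)}"
    unfolding config_def by auto
  moreover have "inj_on (\<lambda>j. (tt j, \<theta> j)) {j\<in>S. P (tt j)}"
    using assms by (intro inj_on_marked_point) auto
  ultimately show ?thesis
    by (simp add: sum.reindex)
qed

lemma lam_path_tt: "S \<subseteq> {1..n} \<Longrightarrow> i \<in> {1..n} \<Longrightarrow> lam_path S \<theta> (tt i) = lam S \<theta> i"
proof -
  assume "S \<subseteq> {1..n}" "i \<in> {1..n}"
  then have "{j\<in>S. tt j < tt i} = S \<inter> {..<i}"
    using strict_mono_on_less[OF tt_strict_mono] by auto
  then show ?thesis
    unfolding lam_path_def by (subst (2) lam.simps) simp
qed

lemma intensity_config: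
  assumes "S \<subseteq> {1..n}"
  shows "intensity \<mu> \<Phi> (config \<theta> S) = lam_path S \<theta>"
proof (rule intensity_eqI)
  show "finite (config \<theta> S)"
    using assms finite_subset unfolding config_def by blast
  have "(\<Sum>y\<in>{y\<in>config \<theta> S. 0 < fst y \<and> fst y < s}. \<Phi> (s - fst y) * (if snd y \<le> lam_path S \<theta> (fst y) then 1 else 0))
      = (\<Sum>j\<in>{j\<in>S. tt j < s}. \<Phi> (s - tt j) * of_bool (\<theta> j \<le> lam S \<theta> j))" for s
  proof -
    have "(\<Sum>y\<in>{y\<in>config \<theta> S. 0 < fst y \<and> fst y < s}. \<Phi> (s - fst y) * (if snd y \<le> lam_path S \<theta> (fst y) then 1 else 0))
        = (\<Sum>j\<in>{j\<in>S. 0 < tt j \<and> tt j < s}. \<Phi> (s - tt j) * (if \<theta> j \<le> lam_path S \<theta> (tt j) then 1 else 0))"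
      by (rule sum_config[OF assms, where P = "\<lambda>r. 0 < r \<and> r < s"
            and F = "\<lambda>y. \<Phi> (s - fst y) * (if snd y \<le> lam_path S \<theta> (fst y) then 1 else 0)", simplified])
    also have "{j\<in>S. 0 < tt j \<and> tt j < s} = {j\<in>S. tt j < s}"
      using assms tt_pos_on by auto
    also have "(\<Sum>j\<in>{j\<in>S. tt j < s}. \<Phi> (s - tt j) * (if \<theta> j \<le> lam_path S \<theta> (tt j) then 1 else 0))
        = (\<Sum>j\<in>{j\<in>S. tt j < s}. \<Phi> (s - tt j) * of_bool (\<theta> j \<le> lam S \<theta> j))"
      using assms by (intro sum.cong) (auto simp: lam_path_tt subset_iff)
    finally show ?thesis .
  qed
  then show "is_intensity \<mu> \<Phi> (config \<theta> S) (lam_path S \<theta>)"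
    unfolding is_intensity_def lam_path_def[of S \<theta>] by simp
qed

lemma Xproc_config:
  assumes "S \<subseteq> {1..n}" "tt n \<le> t"
  shows "Xproc \<mu> \<Phi> \<zeta> t (config \<theta> S) = thinned_sum (\<lambda>s. \<zeta> (t - s)) S \<theta>"
proof -
  let ?F = "\<lambda>y. \<zeta> (t - fst y) * (if snd y \<le> intensity \<mu> \<Phi> (config \<theta> S) (fst y) then 1 else 0)"
  have "Xproc \<mu> \<Phi> \<zeta> t (config \<theta> S) = (\<Sum>j\<in>{j\<in>S. 0 < tt j \<and> tt j \<le> t}. ?F (tt j, \<theta> j))"
    unfolding Xproc_def by (rule sum_config[OF assms(1), where P = "\<lambda>r. 0 < r \<and> r \<le> t" and F = ?F])
  also have "{j\<in>S. 0 < tt j \<and> tt j \<le> t} = S"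
    using assms tt_pos_on strict_mono_on_leD[OF tt_strict_mono, of _ n] by fastforce
  also have "(\<Sum>j\<in>S. ?F (tt j, \<theta> j)) = thinned_sum (\<lambda>s. \<zeta> (t - s)) S \<theta>"
    unfolding thinned_sum_def using assms(1)
    by (intro sum.cong) (auto simp: intensity_config lam_path_tt subset_iff)
  finally show ?thesis .
qed

lemma cn_eq_thinned_diff:
  assumes "tt n \<le> t"
  shows "cn \<mu> \<Phi> \<zeta> t (map (\<lambda>i. (tt i, \<theta> i)) [1..<Suc n]) = thinned_diff n (\<lambda>s. \<zeta> (t - s)) \<theta>"
proof -
  let ?p = "\<lambda>j. (tt j, \<theta> j)"
  have inj: "inj_on ?p {1..n}"
    by (rule inj_on_marked_point) simp
  have "distinct (sort_key fst (map ?p [1..<Suc n]))"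
    using inj by (simp add: distinct_map atLeastLessThanSuc_atLeastAtMost del: upt_Suc)
  moreover have "set (sort_key fst (map ?p [1..<Suc n])) = ?p ` {1..n}"
    by (simp add: atLeastLessThanSuc_atLeastAtMost del: upt_Suc)
  ultimately have "cn \<mu> \<Phi> \<zeta> t (map ?p [1..<Suc n]) = alt_diff (?p ` {1..n}) (Xproc \<mu> \<Phi> \<zeta> t)"
    unfolding cn_def by (simp add: Dn_eq_alt_diff)
  also have "\<dots> = alt_diff {1..n} (\<lambda>S. Xproc \<mu> \<Phi> \<zeta> t (config \<theta> S))"
    using inj by (simp add: alt_diff_image config_def)
  also have "\<dots> = thinned_diff n (\<lambda>s. \<zeta> (t - s)) \<theta>"
    unfolding thinned_diff_def using assms by (intro alt_diff_cong Xproc_config)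
  finally show ?thesis .
qed

lemma lam_nonneg:
  assumes "A \<subseteq> {1..m}" "Suc m \<le> n"
  shows "0 \<le> lam A \<theta> (Suc m)"
proof -
  have "tt j < tt (Suc m)" if "j \<in> A" for j
    using that assms by (intro strict_mono_onD[OF tt_strict_mono]) auto
  then have "\<mu> \<le> lam A \<theta> (Suc m)"
    by (intro lam_ge Phi_nonneg) (auto intro: less_imp_le)
  then show ?thesis
    using mu_pos by linarith
qed

lemma integral_last_mark:
  assumes "Suc m \<le> n" "x \<in> extensional {1..m}"
  shows "(\<integral>y. indicator (PiE {1..Suc m} (\<lambda>_. {0..})) (x(Suc m := y)) * thinned_diff (Suc m) g (x(Suc m := y)) \<partial>lborel)
       = indicator (PiE {1..m} (\<lambda>_. {0..})) x * (g (tt (Suc m)) * alt_diff {1..m} (\<lambda>A. lam A x (Suc m)))"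
proof -
  let ?l = "\<lambda>A. lam A x (Suc m)"
  let ?c = "indicator (PiE {1..m} (\<lambda>_. {0..})) x * g (tt (Suc m))"
  have integrand: "indicator (PiE {1..Suc m} (\<lambda>_. {0..})) (x(Suc m := y)) * thinned_diff (Suc m) g (x(Suc m := y))
      = ?c * alt_diff {1..m} (\<lambda>A. indicator {0..?l A} y)" for y
  proof -
    have "{1..Suc m} = insert (Suc m) {1..m}" by auto
    then have mark_indicator: "indicator (PiE {1..Suc m} (\<lambda>_. {0..})) (x(Suc m := y))
        = indicator (PiE {1..m} (\<lambda>_. {0..})) x * (indicator {0..} y :: real)"
      using fun_upd_in_PiE_insert_iff[of "Suc m" "{1..m}" x y] assms(2) by (simp add: indicator_def)
    have "thinned_diff (Suc m) g (x(Suc m := y)) = g (tt (Suc m)) * alt_diff {1..m} (\<lambda>A. of_bool (y \<le> ?l A))"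
      by (simp add: thinned_diff_Suc lam_fun_upd_ge alt_diff_mult_left)
    then have "indicator (PiE {1..Suc m} (\<lambda>_. {0..})) (x(Suc m := y)) * thinned_diff (Suc m) g (x(Suc m := y))
        = ?c * (indicator {0..} y * alt_diff {1..m} (\<lambda>A. of_bool (y \<le> ?l A)))"
      unfolding mark_indicator by (simp only: ac_simps)
    also have "indicator {0..} y * alt_diff {1..m} (\<lambda>A. of_bool (y \<le> ?l A))
        = alt_diff {1..m} (\<lambda>A. indicator {0..?l A} y)"
      unfolding alt_diff_mult_left[symmetric] by (intro alt_diff_cong) (simp add: indicator_def)
    finally show ?thesis .
  qed
  have integrable_indicator: "integrable lborel (indicator {0..?l A} :: real \<Rightarrow> real)" for A
    by (intro integrable_real_indicator) (auto simp: emeasure_lborel_Icc_eq)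
  have "(\<integral>y. alt_diff {1..m} (\<lambda>A. indicator {0..?l A} y :: real) \<partial>lborel)
      = alt_diff {1..m} (\<lambda>A. \<integral>y. indicator {0..?l A} y \<partial>lborel)"
    by (rule integral_alt_diff) (rule integrable_indicator)
  also have "\<dots> = alt_diff {1..m} ?l"
    using lam_nonneg assms(1) by (intro alt_diff_cong) simp
  finally show ?thesis
    unfolding integrand by simp
qed

lemma integral_thinned_diff_Suc:
  assumes "Suc m \<le> n"
  shows "(\<integral>\<theta>. indicator (PiE {1..Suc m} (\<lambda>_. {0..})) \<theta> * thinned_diff (Suc m) g \<theta> \<partial>PiM {1..Suc m} (\<lambda>_. lborel))
       = (\<integral>x. indicator (PiE {1..m} (\<lambda>_. {0..})) x * (g (tt (Suc m)) * alt_diff {1..m} (\<lambda>A. lam A x (Suc m)))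
            \<partial>PiM {1..m} (\<lambda>_. lborel))"
proof -
  interpret product_sigma_finite "\<lambda>_::nat. lborel :: real measure" by standard
  let ?F = "\<lambda>\<theta>. indicator (PiE {1..Suc m} (\<lambda>_. {0..})) \<theta> * thinned_diff (Suc m) g \<theta>"
  have "{1..Suc m} = insert (Suc m) {1..m}" by auto
  then have "(\<integral>\<theta>. ?F \<theta> \<partial>PiM {1..Suc m} (\<lambda>_. lborel))
      = (\<integral>x. (\<integral>y. ?F (x(Suc m := y)) \<partial>lborel) \<partial>PiM {1..m} (\<lambda>_. lborel))"
    using integrable_thinned_diff[of "Suc m" g] by (simp add: product_integral_insert)
  also have "\<dots> = (\<integral>x. indicator (PiE {1..m} (\<lambda>_. {0..})) x * (g (tt (Suc m)) * alt_diff {1..m} (\<lambda>A. lam A x (Suc m)))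
            \<partial>PiM {1..m} (\<lambda>_. lborel))"
    using assms by (intro Bochner_Integration.integral_cong integral_last_mark) (auto simp: space_PiM PiE_def)
  finally show ?thesis .
qed

lemma integral_thinned_diff:
  assumes "1 \<le> k" "k \<le> n"
  shows "(\<integral>\<theta>. indicator (PiE {1..k} (\<lambda>_. {0..})) \<theta> * thinned_diff k g \<theta> \<partial>PiM {1..k} (\<lambda>_. lborel))
       = \<mu> * g (tt k) * (\<Prod>i\<in>{2..k}. \<Phi> (tt i - tt (i - 1)))"
  using assms
proof (induction k arbitrary: g rule: nat_induct_at_least)
  case base
  have "lam {} x 1 = \<mu>" for x
    by (subst lam.simps) simp
  then show ?case
    using integral_thinned_diff_Suc[of 0 g] base
    by (simp add: PiM_empty lebesgue_integral_count_space_finite)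
next
  case (Suc m)
  let ?g' = "\<lambda>s. \<Phi> (tt (Suc m) - s)"
  have "(\<integral>\<theta>. indicator (PiE {1..Suc m} (\<lambda>_. {0..})) \<theta> * thinned_diff (Suc m) g \<theta> \<partial>PiM {1..Suc m} (\<lambda>_. lborel))
      = (\<integral>x. g (tt (Suc m)) * (indicator (PiE {1..m} (\<lambda>_. {0..})) x * thinned_diff m ?g' x) \<partial>PiM {1..m} (\<lambda>_. lborel))"
    unfolding integral_thinned_diff_Suc[OF Suc.prems] alt_diff_lam[OF Suc.hyps] by (simp only: ac_simps)
  also have "\<dots> = g (tt (Suc m)) * (\<integral>x. indicator (PiE {1..m} (\<lambda>_. {0..})) x * thinned_diff m ?g' x \<partial>PiM {1..m} (\<lambda>_. lborel))"
    by (rule integral_mult_right_zero)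
  also have "\<dots> = g (tt (Suc m)) * (\<mu> * \<Phi> (tt (Suc m) - tt m) * (\<Prod>i\<in>{2..m}. \<Phi> (tt i - tt (i - 1))))"
    using Suc by simp
  also have "\<dots> = \<mu> * g (tt (Suc m)) * (\<Prod>i\<in>{2..Suc m}. \<Phi> (tt i - tt (i - 1)))"
  proof -
    have "{2..Suc m} = insert (Suc m) {2..m}"
      using Suc.hyps by auto
    then show ?thesis by (simp add: ac_simps)
  qed
  finally show ?case .
qed

end

theorem proposition4p6:
  fixes \<mu> t :: real and \<Phi> \<zeta> :: "real \<Rightarrow> real" and n :: nat and tt :: "nat \<Rightarrow> real"
  assumes "\<mu> > 0"
    and "\<forall>s\<ge>0. \<Phi> s \<ge> 0"
    and "set_integrable lborel {0..} \<Phi>"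
    and "(LINT s:{0..}|lborel. \<Phi> s) < 1"
    and "\<zeta> = \<Phi> \<or> \<zeta> = (\<lambda>_. 1)"
    and "t \<ge> 0"
    and "n \<ge> 1"
    and "0 < tt 1"
    and "\<forall>i\<in>{1..<n}. tt i < tt (Suc i)"
    and "tt n \<le> t"
  shows "set_integrable (PiM {1..n} (\<lambda>_. lborel)) (PiE {1..n} (\<lambda>_. {0..}))
           (\<lambda>\<theta>. cn \<mu> \<Phi> \<zeta> t (map (\<lambda>i. (tt i, \<theta> i)) [1..<Suc n]))
       \<and> (LINT \<theta> : PiE {1..n} (\<lambda>_. {0..}) | PiM {1..n} (\<lambda>_. lborel).
            cn \<mu> \<Phi> \<zeta> t (map (\<lambda>i. (tt i, \<theta> i)) [1..<Suc n]))
         = \<mu> * \<zeta> (t - tt n) * (\<Prod>i\<in>{2..n}. \<Phi> (tt i - tt (i - 1)))"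
proof -
  interpret ordered_thinning \<mu> \<Phi> tt n
    using assms(1,2,8,9) by unfold_locales (auto intro: strict_mono_on_atLeastAtMostI)
  let ?g = "\<lambda>s. \<zeta> (t - s)"
  have "cn \<mu> \<Phi> \<zeta> t (map (\<lambda>i. (tt i, \<theta> i)) [1..<Suc n]) = thinned_diff n ?g \<theta>" for \<theta>
    using assms(10) by (rule cn_eq_thinned_diff)
  then show ?thesis
    using integrable_thinned_diff[of n ?g] integral_thinned_diff[of n ?g] assms(7)
    unfolding set_integrable_def set_lebesgue_integral_def by simp
qed

end
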